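(* For every $g\in G(\Gamma)$, the number of walls in $\mathbb{W}$ separating $e$ and $g$ equals $2|g|_r$; that is, $d_{\mathbb{W}}(e,g)=2|g|_r$.
   Context: $G(\Gamma)$ is the graph product of groups $\{G_v\}_{v\in\Gamma}$ over a finite simplicial graph $\Gamma$, with reduced word length $|\cdot|_r$ (length of a word in the vertex groups that cannot be shortened by swapping consecutive syllables from adjacent vertex groups, merging consecutive syllables from the same vertex group, or deleting identities). For $v\in\Gamma$, $\mathbb{A}_v=\{g:\exists g_v\in G_v,\ |g_vg|_r<|g|_r\}$, and $\mathbb{W}=\{k\mathbb{A}_v:k\in G(\Gamma),v\in\Gamma\}$, each $k\mathbb{A}_v$ regarded as the wall $(k\mathbb{A}_v,G(\Gamma)\setminus k\mathbb{A}_v)$ (distinct sets counted once). A wall separates $x,y$ if one lies in $k\mathbb{A}_v$ and the other in its complement; $d_{\mathbb{W}}(x,y)$ is the number of walls in $\mathbb{W}$ separating $x$ and $y$. *)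

theory Defs
  imports "HOL-Algebra.Group"
begin

definition gp_words :: "'v set \<Rightarrow> ('v \<Rightarrow> ('g,'b) monoid_scheme) \<Rightarrow> ('v \<times> 'g) list set" where
  "gp_words V G = {w. \<forall>(v,x)\<in>set w. v \<in> V \<and> x \<in> carrier (G v)}"

inductive gp_step :: "('v \<Rightarrow> 'v \<Rightarrow> bool) \<Rightarrow> ('v \<Rightarrow> ('g,'b) monoid_scheme)
    \<Rightarrow> ('v \<times> 'g) list \<Rightarrow> ('v \<times> 'g) list \<Rightarrow> bool"
  for E G where
  swap: "E u v \<Longrightarrow> gp_step E G (p @ [(u,x),(v,y)] @ s) (p @ [(v,y),(u,x)] @ s)"
| merge: "gp_step E G (p @ [(v,x),(v,y)] @ s) (p @ [(v, x \<otimes>\<^bsub>G v\<^esub> y)] @ s)"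
| delete: "gp_step E G (p @ [(v, \<one>\<^bsub>G v\<^esub>)] @ s) (p @ s)"

definition gp_reduced :: "('v \<Rightarrow> 'v \<Rightarrow> bool) \<Rightarrow> ('v \<Rightarrow> ('g,'b) monoid_scheme)
    \<Rightarrow> ('v \<times> 'g) list \<Rightarrow> bool" where
  "gp_reduced E G w \<longleftrightarrow> \<not> (\<exists>w'. (gp_step E G)\<^sup>*\<^sup>* w w' \<and> length w' < length w)"

definition gp_eq :: "'v set \<Rightarrow> ('v \<Rightarrow> 'v \<Rightarrow> bool) \<Rightarrow> ('v \<Rightarrow> ('g,'b) monoid_scheme)
    \<Rightarrow> (('v \<times> 'g) list \<times> ('v \<times> 'g) list) set" where
  "gp_eq V E G = ({(w,w'). w \<in> gp_words V G \<and> w' \<in> gp_words V G \<and>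
       (gp_step E G w w' \<or> gp_step E G w' w)})\<^sup>* \<inter> (gp_words V G \<times> gp_words V G)"

definition gp_carrier :: "'v set \<Rightarrow> ('v \<Rightarrow> 'v \<Rightarrow> bool) \<Rightarrow> ('v \<Rightarrow> ('g,'b) monoid_scheme)
    \<Rightarrow> ('v \<times> 'g) list set set" where
  "gp_carrier V E G = gp_words V G // gp_eq V E G"

definition gp_mult :: "'v set \<Rightarrow> ('v \<Rightarrow> 'v \<Rightarrow> bool) \<Rightarrow> ('v \<Rightarrow> ('g,'b) monoid_scheme)
    \<Rightarrow> ('v \<times> 'g) list set \<Rightarrow> ('v \<times> 'g) list set \<Rightarrow> ('v \<times> 'g) list set" where
  "gp_mult V E G X Y = gp_eq V E G `` {x @ y | x y. x \<in> X \<and> y \<in> Y}"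

definition gp_one :: "'v set \<Rightarrow> ('v \<Rightarrow> 'v \<Rightarrow> bool) \<Rightarrow> ('v \<Rightarrow> ('g,'b) monoid_scheme)
    \<Rightarrow> ('v \<times> 'g) list set" where
  "gp_one V E G = gp_eq V E G `` {[]}"

definition gp_of :: "'v set \<Rightarrow> ('v \<Rightarrow> 'v \<Rightarrow> bool) \<Rightarrow> ('v \<Rightarrow> ('g,'b) monoid_scheme)
    \<Rightarrow> 'v \<Rightarrow> 'g \<Rightarrow> ('v \<times> 'g) list set" where
  "gp_of V E G v x = gp_eq V E G `` {[(v,x)]}"

definition gp_rlen :: "('v \<Rightarrow> 'v \<Rightarrow> bool) \<Rightarrow> ('v \<Rightarrow> ('g,'b) monoid_scheme)
    \<Rightarrow> ('v \<times> 'g) list set \<Rightarrow> nat" where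
  "gp_rlen E G g = length (SOME w. w \<in> g \<and> gp_reduced E G w)"

definition gp_A :: "'v set \<Rightarrow> ('v \<Rightarrow> 'v \<Rightarrow> bool) \<Rightarrow> ('v \<Rightarrow> ('g,'b) monoid_scheme)
    \<Rightarrow> 'v \<Rightarrow> ('v \<times> 'g) list set set" where
  "gp_A V E G v = {g \<in> gp_carrier V E G. \<exists>x \<in> carrier (G v).
      gp_rlen E G (gp_mult V E G (gp_of V E G v x) g) < gp_rlen E G g}"

text \<open>The collection of walls (each k A_v, distinct sets counted once).\<close>
definition gp_walls :: "'v set \<Rightarrow> ('v \<Rightarrow> 'v \<Rightarrow> bool) \<Rightarrow> ('v \<Rightarrow> ('g,'b) monoid_scheme)
    \<Rightarrow> ('v \<times> 'g) list set set set" where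
  "gp_walls V E G = {(gp_mult V E G k) ` gp_A V E G v | k v. k \<in> gp_carrier V E G \<and> v \<in> V}"

definition gp_separates :: "'a set \<Rightarrow> 'a \<Rightarrow> 'a \<Rightarrow> bool" where
  "gp_separates S x y \<longleftrightarrow> (x \<in> S \<and> y \<notin> S) \<or> (y \<in> S \<and> x \<notin> S)"

definition gp_wall_dist :: "'v set \<Rightarrow> ('v \<Rightarrow> 'v \<Rightarrow> bool) \<Rightarrow> ('v \<Rightarrow> ('g,'b) monoid_scheme)
    \<Rightarrow> ('v \<times> 'g) list set \<Rightarrow> ('v \<times> 'g) list set \<Rightarrow> nat" where
  "gp_wall_dist V E G x y = card {S \<in> gp_walls V E G. gp_separates S x y}"

end

theory Submission
  imports Defs "HOL-Library.Multiset"
begin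

text \<open>
  Left multiplication by a syllable \<open>(v,x)\<close> acts on normal words (no identity syllables, no two
  syllables of the same vertex separated only by syllables of its link): the syllable merges with the
  first \<open>v\<close>-syllable that can be shuffled to the front, or is prepended. Words related by the moves of
  the graph product have normal forms with the same projections onto every pair of non-adjacent
  vertices, hence of the same length; so \<open>|g|\<^sub>r\<close> is the length of the normal form of \<open>g\<close>, and
  \<open>g \<in> A\<^sub>v\<close> iff that normal form can be shuffled to start with a \<open>v\<close>-syllable.

  Left translation permutes the walls and preserves separation. For a syllable \<open>s = (v,x)\<close> the walls
  separating \<open>e\<close> and \<open>s\<close> are exactly \<open>A\<^sub>v\<close> and \<open>s A\<^sub>v\<close>. If \<open>g = s g'\<close> with \<open>|g|\<^sub>r = |g'|\<^sub>r + 1\<close>, the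
  walls separating \<open>e\<close> and \<open>g\<close> form the symmetric difference of those separating \<open>e, s\<close> and the
  translates by \<open>s\<close> of those separating \<open>e, g'\<close>; these two sets are disjoint, so each syllable of a
  reduced word contributes exactly two walls.
\<close>

locale graph_product =
  fixes V :: "'v set" and E :: "'v \<Rightarrow> 'v \<Rightarrow> bool"
    and G :: "'v \<Rightarrow> ('g,'b) monoid_scheme"
  assumes adj_sym: "\<And>u v. E u v \<Longrightarrow> E v u"
    and adj_irrefl: "\<And>v. \<not> E v v"
    and vertex_group: "\<And>v. v \<in> V \<Longrightarrow> group (G v)"
begin

section \<open>Leading syllables and the syllable action\<close>

text \<open>\<open>lead_split v w = Some (p, y, q)\<close>: \<open>w = p @ (v,y) # q\<close> is the first \<open>v\<close>-syllable of \<open>w\<close> that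
  is preceded only by syllables of the link of \<open>v\<close>.\<close>
fun lead_split :: "'v \<Rightarrow> ('v \<times> 'g) list \<Rightarrow> (('v \<times> 'g) list \<times> 'g \<times> ('v \<times> 'g) list) option" where
  "lead_split v [] = None"
| "lead_split v ((u,z)#w) = (if u = v then Some ([], z, w) else if E u v then
      map_option (\<lambda>(p,y,q). ((u,z)#p, y, q)) (lead_split v w) else None)"

text \<open>Left multiplication by the syllable \<open>(v,x)\<close>, computed on normal words.\<close>
definition syl_act :: "'v \<Rightarrow> 'g \<Rightarrow> ('v \<times> 'g) list \<Rightarrow> ('v \<times> 'g) list" where
  "syl_act v x w = (case lead_split v w of
      Some (p,y,q) \<Rightarrow> (if x \<otimes>\<^bsub>G v\<^esub> y = \<one>\<^bsub>G v\<^esub> then p @ q else p @ (v, x \<otimes>\<^bsub>G v\<^esub> y) # q)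
    | None \<Rightarrow> (if x = \<one>\<^bsub>G v\<^esub> then w else (v,x) # w))"

fun normal :: "('v \<times> 'g) list \<Rightarrow> bool" where
  "normal [] = True"
| "normal ((v,x)#w) = (x \<noteq> \<one>\<^bsub>G v\<^esub> \<and> lead_split v w = None \<and> normal w)"

definition in_link :: "'v \<Rightarrow> ('v \<times> 'g) list \<Rightarrow> bool" where
  "in_link v p \<longleftrightarrow> (\<forall>c\<in>set p. E (fst c) v)"

lemma in_link_simps[simp]: "in_link v [] = True" "in_link v (c#p) = (E (fst c) v \<and> in_link v p)"
  "in_link v (p@q) = (in_link v p \<and> in_link v q)"
  by (auto simp: in_link_def)

lemma lead_split_SomeD: "lead_split v w = Some (p,y,q) \<Longrightarrow> w = p @ (v,y) # q \<and> in_link v p"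
  by (induction v w arbitrary: p rule: lead_split.induct) (auto split: if_splits)

lemma lead_split_append_Cons: "in_link v p \<Longrightarrow> lead_split v (p @ (v,y) # q) = Some (p,y,q)"
  by (induction p) (auto simp: adj_irrefl)

lemma lead_split_Cons_None_iff: "lead_split v (c#b) = None \<longleftrightarrow> (fst c \<noteq> v \<and> (\<not> E (fst c) v \<or> lead_split v b = None))"
  by (cases c) auto

lemma lead_split_append_None_iff: "(lead_split v (a @ b) = None) \<longleftrightarrow> (lead_split v a = None \<and> (\<not> in_link v a \<or> lead_split v b = None))"
  by (induction a) (auto simp: lead_split_Cons_None_iff simp del: lead_split.simps(2))

lemma in_link_lead_split_None: "in_link v p \<Longrightarrow> lead_split v p = None"
  by (induction p) (auto simp: adj_irrefl)

lemma lead_split_None_map_fst: "map fst w = map fst w' \<Longrightarrow> (lead_split v w = None) = (lead_split v w' = None)"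
  by (induction w arbitrary: w' ) (auto simp: Cons_eq_map_conv)

lemma lead_split_not_None_mem: "lead_split v w \<noteq> None \<Longrightarrow> \<exists>y. (v,y) \<in> set w"
  using lead_split_SomeD by (metis option.exhaust prod_cases3 in_set_conv_decomp)

lemma lead_split_None_delete:
  assumes "in_link v q" and "lead_split u (p @ (v,y) # q) = None"
  shows "lead_split u (p @ q) = None"
proof -
  have "lead_split u q = None" if "in_link u p"
  proof (rule ccontr)
    assume qn: "lead_split u q \<noteq> None"
    then obtain y' where "(u,y') \<in> set q" using lead_split_not_None_mem by blast
    then have "E v u" "v \<noteq> u" using assms(1) adj_sym adj_irrefl by (auto simp: in_link_def)
    then show False using assms(2) that qn by (simp add: lead_split_append_None_iff)
  qed
  then show ?thesis using assms(2) by (auto simp: lead_split_append_None_iff)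
qed

section \<open>Shuffle equivalence\<close>

text \<open>Swapping adjacent syllables does not change the projection onto a pair of non-adjacent vertices
  (possibly equal); equality of all these projections is the invariant used in place of the shuffle
  relation itself.\<close>
definition proj :: "'v \<Rightarrow> 'v \<Rightarrow> ('v \<times> 'g) list \<Rightarrow> ('v \<times> 'g) list" where
  "proj s t w = filter (\<lambda>c. fst c = s \<or> fst c = t) w"

definition shuffle_eq :: "('v \<times> 'g) list \<Rightarrow> ('v \<times> 'g) list \<Rightarrow> bool" where
  "shuffle_eq w w' \<longleftrightarrow> (\<forall>s t. \<not> E s t \<longrightarrow> proj s t w = proj s t w')"

lemma shuffle_eq_refl[simp]: "shuffle_eq w w" by (simp add: shuffle_eq_def)
lemma shuffle_eq_sym: "shuffle_eq w w' \<Longrightarrow> shuffle_eq w' w" by (simp add: shuffle_eq_def)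
lemma shuffle_eq_trans: "shuffle_eq a b \<Longrightarrow> shuffle_eq b c \<Longrightarrow> shuffle_eq a c" by (simp add: shuffle_eq_def)

lemma proj_in_link_Nil: "in_link v p \<Longrightarrow> \<not> E s t \<Longrightarrow> v = s \<or> v = t \<Longrightarrow> proj s t p = []"
  unfolding proj_def in_link_def using adj_irrefl adj_sym by (auto simp: filter_empty_conv)

lemma lead_split_None_proj:
  "lead_split v w = None \<Longrightarrow> \<exists>t. \<not> E t v \<and> \<not> (\<exists>y l. proj t v w = (v,y) # l)"
proof (induction w)
  case Nil
  then show ?case using adj_irrefl by (auto simp: proj_def)
next
  case (Cons c w)
  obtain u z where c: "c = (u,z)" by (cases c)
  show ?case
  proof (cases "E u v")
    case True
    then obtain t where t: "\<not> E t v" "\<not> (\<exists>y l. proj t v w = (v,y) # l)"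
      using Cons by (auto simp: c split: if_splits)
    then have "t \<noteq> u" using True by auto
    then show ?thesis using t Cons.prems by (auto simp: c proj_def split: if_splits)
  next
    case False
    then show ?thesis using Cons.prems by (intro exI[of _ u]) (auto simp: c proj_def split: if_splits)
  qed
qed

lemma lead_split_not_None_iff_proj:
  "lead_split v w \<noteq> None \<longleftrightarrow> (\<forall>t. \<not> E t v \<longrightarrow> (\<exists>y l. proj t v w = (v,y) # l))"
proof
  assume "lead_split v w \<noteq> None"
  then obtain p y q where "lead_split v w = Some (p,y,q)" by auto
  from lead_split_SomeD[OF this] have w: "w = p @ (v,y) # q" and p: "in_link v p" by auto
  show "\<forall>t. \<not> E t v \<longrightarrow> (\<exists>y l. proj t v w = (v,y) # l)"
    using proj_in_link_Nil[OF p] by (auto simp: w proj_def)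
qed (use lead_split_None_proj in blast)

text \<open>The effect of \<open>syl_act v x\<close> on a projection containing \<open>v\<close>; \<open>b\<close> records whether a \<open>v\<close>-syllable leads.\<close>
definition act_on_head :: "'v \<Rightarrow> 'g \<Rightarrow> bool \<Rightarrow> ('v \<times> 'g) list \<Rightarrow> ('v \<times> 'g) list" where
  "act_on_head v x b l = (if b then (case l of [] \<Rightarrow> [] | c#l' \<Rightarrow>
       (if x \<otimes>\<^bsub>G v\<^esub> snd c = \<one>\<^bsub>G v\<^esub> then l' else (v, x \<otimes>\<^bsub>G v\<^esub> snd c) # l'))
     else (if x = \<one>\<^bsub>G v\<^esub> then l else (v,x) # l))"

lemma proj_syl_act:
  assumes n: "\<not> E s t"
  shows "proj s t (syl_act v x w) =
    (if v = s \<or> v = t then act_on_head v x (lead_split v w \<noteq> None) (proj s t w) else proj s t w)"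
proof (cases "lead_split v w")
  case None
  then show ?thesis by (auto simp: syl_act_def act_on_head_def proj_def)
next
  case (Some a)
  then obtain p y q where S: "lead_split v w = Some (p,y,q)" by (cases a) auto
  from lead_split_SomeD[OF S] have w: "w = p @ (v,y) # q" and p: "in_link v p" by auto
  show ?thesis
  proof (cases "v = s \<or> v = t")
    case True
    then have "proj s t p = []" using proj_in_link_Nil[OF p n] by blast
    then show ?thesis using True S by (auto simp: syl_act_def act_on_head_def proj_def w)
  next
    case False
    then show ?thesis using S by (auto simp: syl_act_def proj_def w)
  qed
qed

lemma syl_act_shuffle_eq:
  assumes P: "shuffle_eq w w'"
  shows "shuffle_eq (syl_act v x w) (syl_act v x w')"
proof -
  have "(lead_split v w \<noteq> None) = (lead_split v w' \<noteq> None)"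
    using P unfolding lead_split_not_None_iff_proj shuffle_eq_def by (metis adj_irrefl adj_sym)
  then show ?thesis using P unfolding shuffle_eq_def by (simp add: proj_syl_act)
qed

lemma lead_split_syl_act_adj:
  assumes E: "E t v"
  shows "(lead_split v (syl_act t c w) = None) = (lead_split v w = None)"
proof (cases "lead_split t w")
  case None
  then show ?thesis using E adj_irrefl[of v] by (auto simp: syl_act_def)
next
  case (Some a)
  then obtain p y q where S: "lead_split t w = Some (p,y,q)" by (cases a) auto
  from lead_split_SomeD[OF S] have w: "w = p @ (t,y) # q" by auto
  have "t \<noteq> v" using E adj_irrefl by auto
  then show ?thesis using S E by (auto simp: syl_act_def w lead_split_append_None_iff)
qed

lemma syl_act_commute:
  assumes E: "E u v"
  shows "shuffle_eq (syl_act u x (syl_act v y w)) (syl_act v y (syl_act u x w))"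
  unfolding shuffle_eq_def
proof (intro allI impI)
  fix s t assume n: "\<not> E s t"
  have "u \<noteq> v" using E adj_irrefl by auto
  then have "\<not> ((u = s \<or> u = t) \<and> (v = s \<or> v = t))"
    using E n adj_sym by auto
  moreover have "(lead_split u (syl_act v y w) = None) = (lead_split u w = None)"
    using lead_split_syl_act_adj adj_sym[OF E] by blast
  moreover have "(lead_split v (syl_act u x w) = None) = (lead_split v w = None)"
    using lead_split_syl_act_adj E by blast
  ultimately show "proj s t (syl_act u x (syl_act v y w)) = proj s t (syl_act v y (syl_act u x w))"
    using n by (auto simp: proj_syl_act)
qed

section \<open>Normal forms\<close>

abbreviation "W \<equiv> gp_words V G"

lemma words_simps[simp]: "[] \<in> W" "(c#w \<in> W) = (fst c \<in> V \<and> snd c \<in> carrier (G (fst c)) \<and> w \<in> W)"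
  "(a@b \<in> W) = (a \<in> W \<and> b \<in> W)"
  by (auto simp: gp_words_def)

lemma normal_appendD: "normal (p@q) \<Longrightarrow> normal q"
  by (induction p) auto

lemma normal_replace_syllable: "normal (p@(v,y)#q) \<Longrightarrow> y' \<noteq> \<one>\<^bsub>G v\<^esub> \<Longrightarrow> normal (p@(v,y')#q)"
proof (induction p)
  case Nil then show ?case by simp
next
  case (Cons c p)
  obtain u z where c: "c = (u,z)" by (cases c)
  have "map fst (p@(v,y)#q) = map fst (p@(v,y')#q)" by simp
  from lead_split_None_map_fst[OF this, of u] Cons show ?case by (auto simp: c)
qed

lemma normal_delete_left: "in_link v p \<Longrightarrow> normal (p@(v,y)#q) \<Longrightarrow> normal (p@q)"
proof (induction p)
  case Nil then show ?case by simp
next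
  case (Cons c p)
  obtain u z where c: "c = (u,z)" by (cases c)
  have E: "E u v" using Cons.prems by (simp add: c)
  then have "E v u" "v \<noteq> u" using adj_sym adj_irrefl by auto
  then show ?case using Cons by (auto simp: c lead_split_append_None_iff)
qed

lemma normal_delete_right: "in_link v q \<Longrightarrow> normal (p@(v,y)#q) \<Longrightarrow> normal (p@q)"
  by (induction p) (auto simp: lead_split_None_delete)

lemma normal_snoc: "normal z \<Longrightarrow> x \<noteq> \<one>\<^bsub>G v\<^esub> \<Longrightarrow> \<not> (\<exists>p y q. z = p@(v,y)#q \<and> in_link v q) \<Longrightarrow> normal (z@[(v,x)])"
proof (induction z)
  case Nil then show ?case by simp
next
  case (Cons c z)
  obtain u a where c: "c = (u,a)" by (cases c)
  have nz: "\<not> (\<exists>p y q. z = p@(v,y)#q \<and> in_link v q)"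
  proof
    assume "\<exists>p y q. z = p@(v,y)#q \<and> in_link v q"
    then obtain p y q where "z = p@(v,y)#q" "in_link v q" by blast
    then have "c#z = (c#p)@(v,y)#q \<and> in_link v q" by simp
    then show False using Cons.prems(3) by blast
  qed
  have "\<not> (in_link u z \<and> v = u)"
  proof
    assume "in_link u z \<and> v = u"
    then have "c#z = []@(v,a)#z \<and> in_link v z" by (simp add: c)
    then show False using Cons.prems(3) by blast
  qed
  then show ?case using Cons nz by (auto simp: c lead_split_append_None_iff)
qed

lemma normal_syllable_ne_one: "normal w \<Longrightarrow> (v,x) \<in> set w \<Longrightarrow> x \<noteq> \<one>\<^bsub>G v\<^esub>"
  by (induction w rule: normal.induct) auto

lemma syl_act_words:
  assumes v: "v \<in> V" and x: "x \<in> carrier (G v)" and w: "w \<in> W"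
  shows "syl_act v x w \<in> W"
proof -
  interpret Gv: group "G v" using vertex_group[OF v] .
  show ?thesis
  proof (cases "lead_split v w")
    case None then show ?thesis using v x w by (auto simp: syl_act_def)
  next
    case (Some a)
    then obtain p y q where S: "lead_split v w = Some (p,y,q)" by (cases a) auto
    from lead_split_SomeD[OF S] have ww: "w = p @ (v,y) # q" by auto
    then show ?thesis using S v x w by (auto simp: syl_act_def)
  qed
qed

lemma syl_act_normal:
  assumes v: "v \<in> V" and w: "normal w"
  shows "normal (syl_act v x w)"
proof (cases "lead_split v w")
  case None then show ?thesis using v w by (auto simp: syl_act_def)
next
  case (Some a)
  then obtain p y q where S: "lead_split v w = Some (p,y,q)" by (cases a) auto
  from lead_split_SomeD[OF S] have ww: "w = p @ (v,y) # q" and a: "in_link v p" by auto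
  have w': "normal (p @ (v,y) # q)" using w ww by simp
  show ?thesis
  proof (cases "x \<otimes>\<^bsub>G v\<^esub> y = \<one>\<^bsub>G v\<^esub>")
    case True
    then have "syl_act v x w = p @ q" using S by (simp add: syl_act_def)
    then show ?thesis using normal_delete_left[OF a w'] by simp
  next
    case False
    then have "syl_act v x w = p @ (v, x \<otimes>\<^bsub>G v\<^esub> y) # q" using S by (simp add: syl_act_def)
    then show ?thesis using normal_replace_syllable[OF w' False] by simp
  qed
qed

lemma syl_act_one:
  assumes v: "v \<in> V" and wW: "w \<in> W" and w: "normal w"
  shows "syl_act v \<one>\<^bsub>G v\<^esub> w = w"
proof -
  interpret Gv: group "G v" using vertex_group[OF v] .
  show ?thesis
  proof (cases "lead_split v w")
    case None then show ?thesis by (auto simp: syl_act_def)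
  next
    case (Some a)
    then obtain p y q where S: "lead_split v w = Some (p,y,q)" by (cases a) auto
    from lead_split_SomeD[OF S] have ww: "w = p @ (v,y) # q" by auto
    have "y \<in> carrier (G v)" using wW ww by simp
    moreover have "y \<noteq> \<one>\<^bsub>G v\<^esub>" using normal_syllable_ne_one[OF w] ww by auto
    ultimately show ?thesis using S ww by (auto simp: syl_act_def)
  qed
qed

lemma shuffle_eq_move: "in_link v p \<Longrightarrow> shuffle_eq ((v,x)#p@q) (p@(v,x)#q)"
  unfolding shuffle_eq_def
proof (intro allI impI)
  fix s t assume a: "in_link v p" and n: "\<not> E s t"
  show "proj s t ((v,x)#p@q) = proj s t (p@(v,x)#q)"
  proof (cases "v = s \<or> v = t")
    case True then have "proj s t p = []" using proj_in_link_Nil[OF a n] by blast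
    then show ?thesis by (auto simp: proj_def)
  next
    case False then show ?thesis by (auto simp: proj_def)
  qed
qed

lemma lead_split_None_delete_lead:
  assumes "normal w" and "lead_split v w = Some (p,z,q)"
  shows "lead_split v (p @ q) = None"
proof -
  from lead_split_SomeD[OF assms(2)] have w: "w = p @ (v,z) # q" and p: "in_link v p" by auto
  have "lead_split v q = None" using normal_appendD[of p "(v,z) # q"] assms(1) w by simp
  then show ?thesis using in_link_lead_split_None[OF p] by (simp add: lead_split_append_None_iff)
qed

lemma syl_act_mult_lead_None:
  assumes v: "v \<in> V" and x: "x \<in> carrier (G v)" and N: "lead_split v w = None"
  shows "syl_act v x (syl_act v y w) = syl_act v (x \<otimes>\<^bsub>G v\<^esub> y) w"
proof (cases "y = \<one>\<^bsub>G v\<^esub>")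
  case True
  interpret Gv: group "G v" using vertex_group[OF v] .
  show ?thesis using True N x by (simp add: syl_act_def)
next
  case False
  then have "lead_split v (syl_act v y w) = Some ([],y,w)"
    using N lead_split_append_Cons[of v "[]"] by (simp add: syl_act_def)
  then show ?thesis using N False by (simp add: syl_act_def)
qed

lemma syl_act_mult:
  assumes v: "v \<in> V" and x: "x \<in> carrier (G v)" and y: "y \<in> carrier (G v)"
    and wW: "w \<in> W" and w: "normal w"
  shows "shuffle_eq (syl_act v x (syl_act v y w)) (syl_act v (x \<otimes>\<^bsub>G v\<^esub> y) w)"
proof (cases "lead_split v w")
  case None
  then show ?thesis using syl_act_mult_lead_None[OF v x] by simp
next
  case (Some a)
  interpret Gv: group "G v" using vertex_group[OF v] .
  obtain p z q where S: "lead_split v w = Some (p,z,q)" using Some by (cases a) auto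
  from lead_split_SomeD[OF S] have ww: "w = p @ (v,z) # q" and p: "in_link v p" by auto
  have z: "z \<in> carrier (G v)" using wW ww by simp
  show ?thesis
  proof (cases "y \<otimes>\<^bsub>G v\<^esub> z = \<one>\<^bsub>G v\<^esub>")
    case True
    have yw: "syl_act v y w = p @ q" using S True by (simp add: syl_act_def)
    have N: "lead_split v (p @ q) = None" using lead_split_None_delete_lead[OF w S] .
    have xyz: "x \<otimes>\<^bsub>G v\<^esub> y \<otimes>\<^bsub>G v\<^esub> z = x" using True x y z by (simp add: Gv.m_assoc)
    show ?thesis
    proof (cases "x = \<one>\<^bsub>G v\<^esub>")
      case True
      then show ?thesis using yw N S xyz by (simp add: syl_act_def)
    next
      case False
      then have "syl_act v x (syl_act v y w) = (v,x) # p @ q" using yw N by (simp add: syl_act_def)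
      moreover have "syl_act v (x \<otimes>\<^bsub>G v\<^esub> y) w = p @ (v,x) # q" using S xyz False by (simp add: syl_act_def)
      ultimately show ?thesis using shuffle_eq_move[OF p] by simp
    qed
  next
    case False
    then have "lead_split v (syl_act v y w) = Some (p, y \<otimes>\<^bsub>G v\<^esub> z, q)"
      using S lead_split_append_Cons[OF p] by (simp add: syl_act_def)
    moreover have "x \<otimes>\<^bsub>G v\<^esub> (y \<otimes>\<^bsub>G v\<^esub> z) = x \<otimes>\<^bsub>G v\<^esub> y \<otimes>\<^bsub>G v\<^esub> z" using x y z by (simp add: Gv.m_assoc)
    ultimately show ?thesis using S by (simp add: syl_act_def)
  qed
qed

definition word_act :: "('v \<times> 'g) list \<Rightarrow> ('v \<times> 'g) list \<Rightarrow> ('v \<times> 'g) list" where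
  "word_act a r = foldr (\<lambda>c r. syl_act (fst c) (snd c) r) a r"

definition nf :: "('v \<times> 'g) list \<Rightarrow> ('v \<times> 'g) list" where
  "nf w = word_act w []"

lemma word_act_simps[simp]: "word_act [] r = r" "word_act (c#a) r = syl_act (fst c) (snd c) (word_act a r)"
  "word_act (a@b) r = word_act a (word_act b r)"
  by (auto simp: word_act_def)

lemma nf_simps[simp]: "nf [] = []" "nf (c#w) = syl_act (fst c) (snd c) (nf w)"
  "nf (a@b) = word_act a (nf b)"
  by (auto simp: nf_def)

lemma word_act_words: "a \<in> W \<Longrightarrow> r \<in> W \<Longrightarrow> word_act a r \<in> W"
  by (induction a) (auto intro: syl_act_words)

lemma word_act_normal: "a \<in> W \<Longrightarrow> normal r \<Longrightarrow> normal (word_act a r)"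
  by (induction a) (auto intro: syl_act_normal)

lemma nf_words: "w \<in> W \<Longrightarrow> nf w \<in> W"
  using word_act_words[of w "[]"] by (simp add: nf_def)

lemma nf_normal: "w \<in> W \<Longrightarrow> normal (nf w)"
  using word_act_normal[of w "[]"] by (simp add: nf_def)

lemma nf_normal_id: "normal w \<Longrightarrow> nf w = w"
  by (induction w rule: normal.induct) (auto simp: syl_act_def)

lemma word_act_shuffle_eq: "shuffle_eq r r' \<Longrightarrow> shuffle_eq (word_act a r) (word_act a r')"
  by (induction a) (auto intro: syl_act_shuffle_eq)

lemma shuffle_eq_length:
  assumes P: "shuffle_eq a b"
  shows "length a = length (b :: ('v \<times> 'g) list)"
proof -
  have "count (mset a) c = count (mset b) c" for c :: "'v \<times> 'g"
  proof -
    have "proj (fst c) (fst c) a = proj (fst c) (fst c) b" using P adj_irrefl unfolding shuffle_eq_def by blast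
    then have "count (mset (proj (fst c) (fst c) a)) c = count (mset (proj (fst c) (fst c) b)) c" by simp
    then show ?thesis by (simp add: proj_def mset_filter)
  qed
  then have "mset a = mset b" by (simp add: multiset_eq_iff)
  then show ?thesis by (metis size_mset)
qed

lemma gp_step_words: assumes "w \<in> W" "gp_step E G w w'" shows "w' \<in> W"
  using assms(2)
proof (cases rule: gp_step.cases)
  case (merge p v x y s)
  have "v \<in> V" using merge assms by auto
  interpret Gv: group "G v" using vertex_group \<open>v \<in> V\<close> by auto
  show ?thesis using merge assms by auto
qed (use assms in auto)

lemma gp_step_nf_shuffle_eq: assumes "w \<in> W" "gp_step E G w w'" shows "shuffle_eq (nf w) (nf w')"
  using assms(2)
proof (cases rule: gp_step.cases)
  case (swap u v p x y s)
  then show ?thesis by (auto intro: word_act_shuffle_eq syl_act_commute)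
next
  case (merge p v x y s)
  have "s \<in> W" using merge assms by auto
  then show ?thesis using merge assms by (auto intro!: word_act_shuffle_eq syl_act_mult nf_words nf_normal)
next
  case (delete p v s)
  have "s \<in> W" "v \<in> V" using delete assms by auto
  then show ?thesis using delete by (auto simp: syl_act_one nf_words nf_normal)
qed

abbreviation "move_rel \<equiv> {(w,w'). w \<in> W \<and> w' \<in> W \<and> (gp_step E G w w' \<or> gp_step E G w' w)}"

lemma gp_eq_alt: "gp_eq V E G = move_rel\<^sup>* \<inter> (W \<times> W)"
  by (simp add: gp_eq_def)

lemma gp_eq_nf_shuffle_eq: "(w,w') \<in> gp_eq V E G \<Longrightarrow> shuffle_eq (nf w) (nf w')"
proof -
  assume "(w,w') \<in> gp_eq V E G"
  then have "(w,w') \<in> move_rel\<^sup>*" by (simp add: gp_eq_alt)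
  then show ?thesis
  proof (induction rule: rtrancl_induct)
    case base then show ?case by simp
  next
    case (step y z)
    then have "shuffle_eq (nf y) (nf z)" using gp_step_nf_shuffle_eq shuffle_eq_sym by blast
    then show ?case using step.IH shuffle_eq_trans by blast
  qed
qed

lemma gp_eq_equiv: "equiv W (gp_eq V E G)"
proof (rule equivI)
  show "refl_on W (gp_eq V E G)" by (auto simp: refl_on_def gp_eq_alt)
  have "sym move_rel" by (auto simp: sym_def)
  then have "sym (move_rel\<^sup>*)" by (rule sym_rtrancl)
  then show "sym (gp_eq V E G)" unfolding gp_eq_alt by (auto simp: sym_def)
  show "trans (gp_eq V E G)" unfolding gp_eq_alt
    by (rule trans_Int) (auto simp: trans_def intro: rtrancl_trans)
qed (auto simp: gp_eq_alt)

lemma gp_eq_refl: "w \<in> W \<Longrightarrow> (w,w) \<in> gp_eq V E G"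
  by (simp add: gp_eq_alt)
lemma gp_eq_sym: "(a,b) \<in> gp_eq V E G \<Longrightarrow> (b,a) \<in> gp_eq V E G"
  using gp_eq_equiv by (meson equivE symD)
lemma gp_eq_trans: "(a,b) \<in> gp_eq V E G \<Longrightarrow> (b,c) \<in> gp_eq V E G \<Longrightarrow> (a,c) \<in> gp_eq V E G"
  using gp_eq_equiv by (meson equivE transD)
lemma gp_eq_W: "(a,b) \<in> gp_eq V E G \<Longrightarrow> a \<in> W \<and> b \<in> W"
  by (simp add: gp_eq_alt)

lemma gp_steps_words: "(gp_step E G)\<^sup>*\<^sup>* w w' \<Longrightarrow> w \<in> W \<Longrightarrow> w' \<in> W"
  by (induction rule: rtranclp_induct) (auto intro: gp_step_words)

lemma gp_steps_gp_eq: "(gp_step E G)\<^sup>*\<^sup>* w w' \<Longrightarrow> w \<in> W \<Longrightarrow> (w,w') \<in> gp_eq V E G"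
proof (induction rule: rtranclp_induct)
  case base then show ?case by (simp add: gp_eq_refl)
next
  case (step y z)
  have "y \<in> W" using gp_steps_words step by blast
  then have "z \<in> W" using gp_step_words step by blast
  then have "(y,z) \<in> gp_eq V E G" using \<open>y \<in> W\<close> step by (auto simp: gp_eq_alt)
  then show ?case using step gp_eq_trans by blast
qed

lemma gp_step_context: assumes "gp_step E G w w'" shows "gp_step E G (a@w@b) (a@w'@b)"
  using assms
proof (cases rule: gp_step.cases)
  case (swap u v p x y s)
  then show ?thesis using gp_step.swap[of E u v G "a@p" x y "s@b"] by simp
next
  case (merge p v x y s)
  then show ?thesis using gp_step.merge[of E G "a@p" v x y "s@b"] by simp
next
  case (delete p v s)
  then show ?thesis using gp_step.delete[of E G "a@p" v "s@b"] by simp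
qed

lemma gp_steps_context: "(gp_step E G)\<^sup>*\<^sup>* w w' \<Longrightarrow> (gp_step E G)\<^sup>*\<^sup>* (a@w@b) (a@w'@b)"
  by (induction rule: rtranclp_induct) (auto intro: rtranclp.rtrancl_into_rtrancl gp_step_context)

lemma gp_eq_context:
  assumes H: "(w,w') \<in> gp_eq V E G" and a: "a \<in> W" and b: "b \<in> W"
  shows "(a@w@b, a@w'@b) \<in> gp_eq V E G"
proof -
  from H have "(w,w') \<in> move_rel\<^sup>*" by (simp add: gp_eq_alt)
  then have "(a@w@b, a@w'@b) \<in> move_rel\<^sup>*"
  proof (induction rule: rtrancl_induct)
    case base then show ?case by simp
  next
    case (step y z)
    then have "(a@y@b, a@z@b) \<in> move_rel" using a b gp_step_context by auto
    then show ?case by (rule rtrancl_into_rtrancl[OF step.IH])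
  qed
  then show ?thesis using H a b by (auto simp: gp_eq_alt)
qed

lemma gp_eq_append:
  assumes A: "(a,a') \<in> gp_eq V E G" and B: "(b,b') \<in> gp_eq V E G"
  shows "(a@b, a'@b') \<in> gp_eq V E G"
proof -
  have "([]@a@b, []@a'@b) \<in> gp_eq V E G" using gp_eq_context[OF A, of "[]" b] gp_eq_W[OF B] by simp
  moreover have "(a'@b@[], a'@b'@[]) \<in> gp_eq V E G" using gp_eq_context[OF B, of a' "[]"] gp_eq_W[OF A] by simp
  ultimately show ?thesis using gp_eq_trans by simp
qed

lemma gp_steps_shuffle_right: "in_link v p \<Longrightarrow> (gp_step E G)\<^sup>*\<^sup>* (a@(v,x)#p@b) (a@p@(v,x)#b)"
proof (induction p arbitrary: a)
  case Nil then show ?case by simp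
next
  case (Cons c p)
  obtain u z where c: "c = (u,z)" by (cases c)
  have "E v u" using Cons.prems adj_sym by (simp add: c)
  then have s1: "gp_step E G (a@[(v,x),(u,z)]@(p@b)) (a@[(u,z),(v,x)]@(p@b))" by (rule gp_step.swap)
  have s2: "(gp_step E G)\<^sup>*\<^sup>* ((a@[c])@(v,x)#p@b) ((a@[c])@p@(v,x)#b)" using Cons.IH[of "a@[c]"] Cons.prems by simp
  have "(gp_step E G)\<^sup>*\<^sup>* (a@[(v,x),(u,z)]@(p@b)) ((a@[c])@p@(v,x)#b)"
    using converse_rtranclp_into_rtranclp[of "gp_step E G", OF s1] s2 c by simp
  then show ?case by (simp add: c)
qed

lemma gp_steps_shuffle_left: "in_link v q \<Longrightarrow> (gp_step E G)\<^sup>*\<^sup>* (a@q@(v,x)#b) (a@(v,x)#q@b)"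
proof (induction q arbitrary: a)
  case Nil then show ?case by simp
next
  case (Cons c q)
  obtain u z where c: "c = (u,z)" by (cases c)
  have "E u v" using Cons.prems by (simp add: c)
  then have s1: "gp_step E G (a@[(u,z),(v,x)]@(q@b)) (a@[(v,x),(u,z)]@(q@b))" by (rule gp_step.swap)
  have s2: "(gp_step E G)\<^sup>*\<^sup>* ((a@[c])@q@(v,x)#b) ((a@[c])@(v,x)#q@b)" using Cons.IH[of "a@[c]"] Cons.prems by simp
  have "(gp_step E G)\<^sup>*\<^sup>* ((a@[c])@q@(v,x)#b) (a@[(v,x),(u,z)]@(q@b))"
    using rtranclp.rtrancl_into_rtrancl[of "gp_step E G", OF _ s1] s2 c by simp
  then show ?case by (simp add: c)
qed

lemma gp_steps_syl_act: "(gp_step E G)\<^sup>*\<^sup>* ((v,x)#r) (syl_act v x r)"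
proof (cases "lead_split v r")
  case None
  show ?thesis
  proof (cases "x = \<one>\<^bsub>G v\<^esub>")
    case True
    have "gp_step E G ([]@[(v,x)]@r) ([]@r)" unfolding True by (rule gp_step.delete)
    then show ?thesis using None True by (simp add: syl_act_def)
  next
    case False then show ?thesis using None by (simp add: syl_act_def)
  qed
next
  case (Some a)
  then obtain p y q where S: "lead_split v r = Some (p,y,q)" by (cases a) auto
  from lead_split_SomeD[OF S] have rr: "r = p @ (v,y) # q" and a: "in_link v p" by auto
  have 1: "(gp_step E G)\<^sup>*\<^sup>* ((v,x)#r) (p@[(v,x),(v,y)]@q)"
    using gp_steps_shuffle_right[OF a, of "[]" x "(v,y)#q"] rr by simp
  have 2: "gp_step E G (p@[(v,x),(v,y)]@q) (p@[(v, x \<otimes>\<^bsub>G v\<^esub> y)]@q)" by (rule gp_step.merge)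
  show ?thesis
  proof (cases "x \<otimes>\<^bsub>G v\<^esub> y = \<one>\<^bsub>G v\<^esub>")
    case True
    have 3: "gp_step E G (p@[(v, x \<otimes>\<^bsub>G v\<^esub> y)]@q) (p@q)" unfolding True by (rule gp_step.delete)
    show ?thesis using 1 2 3 S True by (simp add: syl_act_def)
  next
    case False
    show ?thesis using 1 2 S False by (simp add: syl_act_def)
  qed
qed

lemma gp_eq_syl_act: "v \<in> V \<Longrightarrow> x \<in> carrier (G v) \<Longrightarrow> r \<in> W \<Longrightarrow> ((v,x)#r, syl_act v x r) \<in> gp_eq V E G"
  by (rule gp_steps_gp_eq[OF gp_steps_syl_act]) simp

lemma gp_eq_nf: "w \<in> W \<Longrightarrow> (w, nf w) \<in> gp_eq V E G"
proof (induction w)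
  case Nil then show ?case by (simp add: gp_eq_refl)
next
  case (Cons c w)
  obtain v x where c: "c = (v,x)" by (cases c)
  have v: "v \<in> V" and x: "x \<in> carrier (G v)" and w: "w \<in> W" using Cons.prems by (auto simp: c)
  have "([(v,x)]@w, [(v,x)]@nf w) \<in> gp_eq V E G"
    using gp_eq_append[OF gp_eq_refl[of "[(v,x)]"] Cons.IH[OF w]] v x by simp
  moreover have "((v,x)#nf w, syl_act v x (nf w)) \<in> gp_eq V E G" using gp_eq_syl_act v x nf_words w by blast
  ultimately show ?case using gp_eq_trans by (simp add: c)
qed

lemma not_normal_shorten: "\<not> normal w \<Longrightarrow> \<exists>w'. (gp_step E G)\<^sup>*\<^sup>* w w' \<and> length w' < length w"
proof (induction w)
  case Nil then show ?case by simp
next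
  case (Cons c w)
  obtain v x where c: "c = (v,x)" by (cases c)
  consider "x = \<one>\<^bsub>G v\<^esub>" | "lead_split v w \<noteq> None" | "\<not> normal w" using Cons.prems by (auto simp: c)
  then show ?case
  proof cases
    case 1
    have "gp_step E G ([]@[(v,x)]@w) ([]@w)" unfolding 1 by (rule gp_step.delete)
    then show ?thesis by (auto simp: c)
  next
    case 2
    then have "length (syl_act v x w) < length ((v,x) # w)"
      by (auto simp: syl_act_def split: option.splits dest: lead_split_SomeD)
    then show ?thesis using gp_steps_syl_act by (auto simp: c)
  next
    case 3
    then obtain w' where "(gp_step E G)\<^sup>*\<^sup>* w w'" "length w' < length w" using Cons.IH by blast
    then show ?thesis using gp_steps_context[of w w' "[c]" "[]"] by (intro exI[of _ "c#w'"]) auto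
  qed
qed

lemma reduced_normal: "gp_reduced E G w \<Longrightarrow> normal w"
  using not_normal_shorten unfolding gp_reduced_def by blast


section \<open>The graph product as a group\<close>

definition cls :: "('v \<times> 'g) list \<Rightarrow> ('v \<times> 'g) list set" where
  "cls w = gp_eq V E G `` {w}"

lemma gp_carrier_eq: "gp_carrier V E G = cls ` W"
  by (auto simp: gp_carrier_def quotient_def cls_def)

lemma cls_in_carrier: "w \<in> W \<Longrightarrow> cls w \<in> gp_carrier V E G"
  by (simp add: gp_carrier_eq)

lemma cls_eq_iff: "a \<in> W \<Longrightarrow> b \<in> W \<Longrightarrow> cls a = cls b \<longleftrightarrow> (a,b) \<in> gp_eq V E G"
  unfolding cls_def using equiv_class_eq_iff[OF gp_eq_equiv] by auto

lemma mem_cls: "w' \<in> cls w \<longleftrightarrow> (w,w') \<in> gp_eq V E G"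
  by (simp add: cls_def)

lemma cls_eqI: "(a,b) \<in> gp_eq V E G \<Longrightarrow> cls a = cls b"
  using cls_eq_iff gp_eq_W by blast

lemma gp_mult_cls:
  assumes a: "a \<in> W" and b: "b \<in> W"
  shows "gp_mult V E G (cls a) (cls b) = cls (a@b)"
proof
  show "gp_mult V E G (cls a) (cls b) \<subseteq> cls (a @ b)"
  proof
    fix z assume "z \<in> gp_mult V E G (cls a) (cls b)"
    then obtain x y where xy: "(a,x) \<in> gp_eq V E G" "(b,y) \<in> gp_eq V E G" "(x@y, z) \<in> gp_eq V E G"
      by (auto simp: gp_mult_def mem_cls)
    then have "(a@b, x@y) \<in> gp_eq V E G" using gp_eq_append by blast
    then show "z \<in> cls (a@b)" using xy(3) gp_eq_trans by (auto simp: mem_cls)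
  qed
next
  show "cls (a @ b) \<subseteq> gp_mult V E G (cls a) (cls b)"
  proof
    fix z assume "z \<in> cls (a@b)"
    moreover have "a \<in> cls a" "b \<in> cls b" using a b gp_eq_refl by (auto simp: mem_cls)
    ultimately show "z \<in> gp_mult V E G (cls a) (cls b)"
      unfolding gp_mult_def by (auto simp: mem_cls)
  qed
qed

lemma gp_one_cls: "gp_one V E G = cls []" by (simp add: gp_one_def cls_def)
lemma gp_of_cls: "gp_of V E G v x = cls [(v,x)]" by (simp add: gp_of_def cls_def)

definition word_inv :: "('v \<times> 'g) list \<Rightarrow> ('v \<times> 'g) list" where
  "word_inv w = rev (map (\<lambda>c. (fst c, inv\<^bsub>G (fst c)\<^esub> snd c)) w)"

lemma word_inv_simps[simp]: "word_inv [] = []" "word_inv (c#w) = word_inv w @ [(fst c, inv\<^bsub>G (fst c)\<^esub> snd c)]"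
  by (auto simp: word_inv_def)

lemma word_inv_words: "w \<in> W \<Longrightarrow> word_inv w \<in> W"
proof (induction w)
  case (Cons c w)
  interpret Gv: group "G (fst c)" using vertex_group Cons.prems by auto
  show ?case using Cons by auto
qed simp

lemma word_inv_in_link: "in_link v w \<Longrightarrow> in_link v (word_inv w)"
  by (induction w) auto

lemma gp_eq_word_inv_append: "w \<in> W \<Longrightarrow> (word_inv w @ w, []) \<in> gp_eq V E G"
proof (induction w)
  case Nil then show ?case by (simp add: gp_eq_refl)
next
  case (Cons c w)
  obtain v x where c: "c = (v,x)" by (cases c)
  have v: "v \<in> V" and x: "x \<in> carrier (G v)" and w: "w \<in> W" using Cons.prems by (auto simp: c)
  interpret Gv: group "G v" using vertex_group v by auto
  have s1: "gp_step E G (word_inv w @ [(v, inv\<^bsub>G v\<^esub> x), (v,x)] @ w) (word_inv w @ [(v, inv\<^bsub>G v\<^esub> x \<otimes>\<^bsub>G v\<^esub> x)] @ w)"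
    by (rule gp_step.merge)
  have s2: "gp_step E G (word_inv w @ [(v, \<one>\<^bsub>G v\<^esub>)] @ w) (word_inv w @ w)"
    by (rule gp_step.delete)
  have "(gp_step E G)\<^sup>*\<^sup>* (word_inv w @ [(v, inv\<^bsub>G v\<^esub> x), (v,x)] @ w) (word_inv w @ w)"
    using s1 s2 x by auto
  then have "(word_inv w @ [(v, inv\<^bsub>G v\<^esub> x), (v,x)] @ w, word_inv w @ w) \<in> gp_eq V E G"
    by (rule gp_steps_gp_eq) (use word_inv_words w v x in auto)
  then show ?case using Cons.IH[OF w] gp_eq_trans by (simp add: c)
qed

definition GP :: "('v \<times> 'g) list set monoid" where
  "GP = \<lparr>carrier = gp_carrier V E G, monoid.mult = gp_mult V E G, one = gp_one V E G\<rparr>"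

lemma GP_simps[simp]: "carrier GP = gp_carrier V E G" "monoid.mult GP = gp_mult V E G" "one GP = gp_one V E G"
  by (auto simp: GP_def)

lemma GP_group: "group GP"
proof (rule groupI)
  fix x y assume "x \<in> carrier GP" "y \<in> carrier GP"
  then show "x \<otimes>\<^bsub>GP\<^esub> y \<in> carrier GP"
    by (auto simp: gp_carrier_eq gp_mult_cls)
next
  show "\<one>\<^bsub>GP\<^esub> \<in> carrier GP" by (simp add: gp_one_cls cls_in_carrier)
next
  fix x y z assume "x \<in> carrier GP" "y \<in> carrier GP" "z \<in> carrier GP"
  then show "x \<otimes>\<^bsub>GP\<^esub> y \<otimes>\<^bsub>GP\<^esub> z = x \<otimes>\<^bsub>GP\<^esub> (y \<otimes>\<^bsub>GP\<^esub> z)"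
    by (auto simp: gp_carrier_eq gp_mult_cls)
next
  fix x assume "x \<in> carrier GP"
  then show "\<one>\<^bsub>GP\<^esub> \<otimes>\<^bsub>GP\<^esub> x = x"
    by (auto simp: gp_carrier_eq gp_mult_cls gp_one_cls)
next
  fix x assume "x \<in> carrier GP"
  then obtain w where w: "w \<in> W" "x = cls w" by (auto simp: gp_carrier_eq)
  have "cls (word_inv w) \<otimes>\<^bsub>GP\<^esub> x = \<one>\<^bsub>GP\<^esub>"
    using w word_inv_words gp_eq_word_inv_append by (simp add: gp_mult_cls gp_one_cls cls_eqI)
  moreover have "cls (word_inv w) \<in> carrier GP" using word_inv_words w by (simp add: cls_in_carrier)
  ultimately show "\<exists>y\<in>carrier GP. y \<otimes>\<^bsub>GP\<^esub> x = \<one>\<^bsub>GP\<^esub>" by blast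
qed

sublocale GP: group GP
  by (rule GP_group)

lemma GP_inv_cls:
  assumes w: "w \<in> W"
  shows "inv\<^bsub>GP\<^esub> (cls w) = cls (word_inv w)"
  by (rule GP.inv_equality)
    (use w word_inv_words gp_eq_word_inv_append in \<open>auto simp: gp_mult_cls gp_one_cls cls_eqI cls_in_carrier\<close>)

lemma cls_nf: "w \<in> W \<Longrightarrow> cls (nf w) = cls w"
  using gp_eq_nf cls_eqI by (metis gp_eq_sym)

lemma gp_rlen_cls:
  assumes w: "w \<in> W"
  shows "gp_rlen E G (cls w) = length (nf w)"
proof -
  \<comment> \<open>The \<open>SOME\<close> in \<open>gp_rlen\<close> is not vacuous: a shortest word reachable from \<open>w\<close> is reduced.\<close>
  obtain w1 where w1: "(gp_step E G)\<^sup>*\<^sup>* w w1" "\<forall>y. (gp_step E G)\<^sup>*\<^sup>* w y \<longrightarrow> length w1 \<le> length y"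
    using ex_has_least_nat[of "\<lambda>y. (gp_step E G)\<^sup>*\<^sup>* w y" w length] by auto
  have "gp_reduced E G w1"
    unfolding gp_reduced_def using w1 by (meson leD rtranclp_trans)
  moreover have "w1 \<in> cls w" using gp_steps_gp_eq[OF w1(1) w] by (simp add: mem_cls)
  ultimately have ex: "\<exists>w'. w' \<in> cls w \<and> gp_reduced E G w'" by blast
  define w2 where "w2 = (SOME w'. w' \<in> cls w \<and> gp_reduced E G w')"
  have w2: "w2 \<in> cls w" "gp_reduced E G w2" using someI_ex[OF ex] by (auto simp: w2_def)
  have "normal w2" using reduced_normal w2(2) by blast
  have "shuffle_eq (nf w) (nf w2)" using gp_eq_nf_shuffle_eq w2(1) by (simp add: mem_cls)
  then have "length (nf w) = length w2" using nf_normal_id[OF \<open>normal w2\<close>] shuffle_eq_length by simp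
  then show ?thesis by (simp add: gp_rlen_def w2_def)
qed

lemma cls_in_A_iff:
  assumes v: "v \<in> V" and w: "w \<in> W"
  shows "cls w \<in> gp_A V E G v \<longleftrightarrow> lead_split v (nf w) \<noteq> None"
proof -
  interpret Gv: group "G v" using vertex_group v by auto
  define r where "r = nf w"
  have rW: "r \<in> W" and rS: "normal r" using nf_words nf_normal w by (auto simp: r_def)
  have L: "gp_rlen E G (gp_mult V E G (gp_of V E G v x) (cls w)) = length (syl_act v x r)"
    if x: "x \<in> carrier (G v)" for x
    using x v w by (simp add: gp_of_cls gp_mult_cls gp_rlen_cls r_def)
  have "(\<exists>x\<in>carrier (G v). length (syl_act v x r) < length r) \<longleftrightarrow> lead_split v r \<noteq> None"
  proof
    assume "\<exists>x\<in>carrier (G v). length (syl_act v x r) < length r"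
    then obtain x where "length (syl_act v x r) < length r" by blast
    then show "lead_split v r \<noteq> None" by (cases "lead_split v r") (auto simp: syl_act_def split: if_splits)
  next
    assume "lead_split v r \<noteq> None"
    then obtain p y q where S: "lead_split v r = Some (p,y,q)" by auto
    from lead_split_SomeD[OF S] have rr: "r = p @ (v,y) # q" by auto
    have y: "y \<in> carrier (G v)" using rW rr by simp
    have "syl_act v (inv\<^bsub>G v\<^esub> y) r = p @ q" using S y by (simp add: syl_act_def)
    then show "\<exists>x\<in>carrier (G v). length (syl_act v x r) < length r" using y rr
      by (intro bexI[of _ "inv\<^bsub>G v\<^esub> y"]) auto
  qed
  then show ?thesis using L w unfolding gp_A_def by (auto simp: cls_in_carrier gp_rlen_cls r_def)
qed

lemma cls_in_A_iff_normal:
  "v \<in> V \<Longrightarrow> w \<in> W \<Longrightarrow> normal w \<Longrightarrow> cls w \<in> gp_A V E G v \<longleftrightarrow> lead_split v w \<noteq> None"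
  using cls_in_A_iff nf_normal_id by simp

lemma normal_representative:
  assumes "g \<in> gp_carrier V E G"
  obtains w where "w \<in> W" "normal w" "g = cls w"
proof -
  obtain w0 where "w0 \<in> W" "g = cls w0" using assms by (auto simp: gp_carrier_eq)
  then show ?thesis using that[of "nf w0"] nf_words nf_normal cls_nf by auto
qed

lemma gp_rlen_normal: "w \<in> W \<Longrightarrow> normal w \<Longrightarrow> gp_rlen E G (cls w) = length w"
  using gp_rlen_cls nf_normal_id by simp

section \<open>Walls\<close>

abbreviation "C \<equiv> gp_carrier V E G"
abbreviation "mul \<equiv> gp_mult V E G"
abbreviation "e \<equiv> gp_one V E G"
abbreviation "ginv \<equiv> m_inv GP"

definition sep_walls :: "('v \<times> 'g) list set \<Rightarrow> ('v \<times> 'g) list set \<Rightarrow> ('v \<times> 'g) list set set set" where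
  "sep_walls a b = {S \<in> gp_walls V E G. gp_separates S a b}"

lemma mul_closed[simp]: "a \<in> C \<Longrightarrow> b \<in> C \<Longrightarrow> mul a b \<in> C"
  using GP.m_closed[of a b] by simp
lemma ginv_closed[simp]: "a \<in> C \<Longrightarrow> ginv a \<in> C"
  using GP.inv_closed[of a] by simp
lemma e_closed[simp]: "e \<in> C"
  using GP.one_closed by simp
lemma mul_assoc: "a \<in> C \<Longrightarrow> b \<in> C \<Longrightarrow> c \<in> C \<Longrightarrow> mul (mul a b) c = mul a (mul b c)"
  using GP.m_assoc[of a b c] by simp
lemma mul_linv[simp]: "a \<in> C \<Longrightarrow> mul (ginv a) a = e"
  using GP.l_inv[of a] by simp
lemma mul_rinv[simp]: "a \<in> C \<Longrightarrow> mul a (ginv a) = e"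
  using GP.r_inv[of a] by simp
lemma mul_lone[simp]: "a \<in> C \<Longrightarrow> mul e a = a"
  using GP.l_one[of a] by simp
lemma mul_rone[simp]: "a \<in> C \<Longrightarrow> mul a e = a"
  using GP.r_one[of a] by simp
lemma ginv_mul: "a \<in> C \<Longrightarrow> b \<in> C \<Longrightarrow> ginv (mul a b) = mul (ginv b) (ginv a)"
  using GP.inv_mult_group[of a b] by simp
lemma ginv_mul_cancel: "a \<in> C \<Longrightarrow> b \<in> C \<Longrightarrow> mul (ginv a) (mul a b) = b"
  by (simp add: mul_assoc[symmetric])
lemma mul_ginv_cancel: "a \<in> C \<Longrightarrow> b \<in> C \<Longrightarrow> mul a (mul (ginv a) b) = b"
  by (simp add: mul_assoc[symmetric])
lemma mul_left_cancel: "a \<in> C \<Longrightarrow> b \<in> C \<Longrightarrow> c \<in> C \<Longrightarrow> mul a b = mul a c \<longleftrightarrow> b = c"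
  by (metis ginv_mul_cancel)

lemma A_subset_carrier: "gp_A V E G v \<subseteq> C"
  by (auto simp: gp_A_def)

lemma wall_subset_carrier:
  assumes "S \<in> gp_walls V E G"
  shows "S \<subseteq> C"
proof -
  obtain k v where "S = mul k ` gp_A V E G v" "k \<in> C" using assms by (auto simp: gp_walls_def)
  then show ?thesis using A_subset_carrier[of v] by auto
qed

lemma mem_translate_iff:
  assumes k: "k \<in> C" and a: "a \<in> C" and S: "S \<subseteq> C"
  shows "a \<in> mul k ` S \<longleftrightarrow> mul (ginv k) a \<in> S"
proof
  assume "a \<in> mul k ` S"
  then obtain b where "b \<in> S" "a = mul k b" by auto
  then show "mul (ginv k) a \<in> S" using k S ginv_mul_cancel by auto
next
  assume "mul (ginv k) a \<in> S"
  moreover have "mul k (mul (ginv k) a) = a" using k a mul_ginv_cancel by auto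
  ultimately show "a \<in> mul k ` S" by (metis image_eqI)
qed

lemma translate_translate:
  assumes h: "h \<in> C" and k: "k \<in> C" and S: "S \<subseteq> C"
  shows "mul h ` (mul k ` S) = mul (mul h k) ` S"
proof -
  have "mul h (mul k b) = mul (mul h k) b" if "b \<in> S" for b
    using mul_assoc[of h k b] h k S that by auto
  then show ?thesis by (auto simp: image_image intro!: image_cong)
qed

lemma translate_wall:
  assumes h: "h \<in> C" and "S \<in> gp_walls V E G"
  shows "mul h ` S \<in> gp_walls V E G"
proof -
  obtain k v where S: "S = mul k ` gp_A V E G v" "k \<in> C" "v \<in> V"
    using assms(2) by (auto simp: gp_walls_def)
  then have "mul h ` S = mul (mul h k) ` gp_A V E G v"
    using translate_translate[OF h S(2) A_subset_carrier] by simp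
  moreover have "mul h k \<in> C" using h S(2) by simp
  ultimately show ?thesis using S(3) unfolding gp_walls_def by blast
qed

lemma translate_mem_iff:
  assumes h: "h \<in> C" and a: "a \<in> C" and S: "S \<subseteq> C"
  shows "mul h a \<in> mul h ` S \<longleftrightarrow> a \<in> S"
proof
  assume "mul h a \<in> mul h ` S"
  then obtain b where "b \<in> S" "mul h a = mul h b" by auto
  then show "a \<in> S" using mul_left_cancel[of h a b] h a S by auto
qed auto

lemma separates_translate_iff: "h \<in> C \<Longrightarrow> a \<in> C \<Longrightarrow> b \<in> C \<Longrightarrow> S \<subseteq> C \<Longrightarrow>
   gp_separates (mul h ` S) (mul h a) (mul h b) \<longleftrightarrow> gp_separates S a b"
  by (simp add: gp_separates_def translate_mem_iff)

lemma translate_ginv_translate: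
  assumes h: "h \<in> C" and S: "S \<subseteq> C"
  shows "mul (ginv h) ` (mul h ` S) = S"
proof -
  have "mul (ginv h) ` (mul h ` S) = mul (mul (ginv h) h) ` S" using translate_translate[of "ginv h" h S] h S by simp
  also have "\<dots> = S" using h S by (auto simp: image_def subset_iff)
  finally show ?thesis .
qed

lemma sep_walls_translate:
  assumes h: "h \<in> C" and a: "a \<in> C" and b: "b \<in> C"
  shows "sep_walls (mul h a) (mul h b) = (\<lambda>S. mul h ` S) ` sep_walls a b"
proof
  show "sep_walls (mul h a) (mul h b) \<subseteq> (\<lambda>S. mul h ` S) ` sep_walls a b"
  proof
    fix S assume "S \<in> sep_walls (mul h a) (mul h b)"
    then have SW: "S \<in> gp_walls V E G" and sep: "gp_separates S (mul h a) (mul h b)"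
      by (auto simp: sep_walls_def)
    define T where "T = mul (ginv h) ` S"
    have TW: "T \<in> gp_walls V E G" using translate_wall[OF _ SW] h by (simp add: T_def)
    have ST: "S = mul h ` T"
      using translate_ginv_translate[of "ginv h" S] wall_subset_carrier[OF SW] h by (simp add: T_def)
    have "gp_separates T a b" using sep separates_translate_iff[OF h a b wall_subset_carrier[OF TW]] ST by simp
    then show "S \<in> (\<lambda>S. mul h ` S) ` sep_walls a b" using TW ST by (auto simp: sep_walls_def)
  qed
next
  show "(\<lambda>S. mul h ` S) ` sep_walls a b \<subseteq> sep_walls (mul h a) (mul h b)"
    using translate_wall[OF h] separates_translate_iff[OF h a b] wall_subset_carrier by (auto simp: sep_walls_def)
qed

lemma inj_on_translate: "h \<in> C \<Longrightarrow> inj_on (\<lambda>S. mul h ` S) (sep_walls a b)"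
proof (rule inj_onI)
  fix S T assume h: "h \<in> C" and S: "S \<in> sep_walls a b" and T: "T \<in> sep_walls a b" and eq: "mul h ` S = mul h ` T"
  have "S = mul (ginv h) ` (mul h ` S)" using translate_ginv_translate[OF h] wall_subset_carrier S by (simp add: sep_walls_def)
  also have "\<dots> = mul (ginv h) ` (mul h ` T)" using eq by simp
  also have "\<dots> = T" using translate_ginv_translate[OF h] wall_subset_carrier T by (simp add: sep_walls_def)
  finally show "S = T" .
qed

lemma sep_walls_symdiff: "sep_walls a c = (sep_walls a b - sep_walls b c) \<union> (sep_walls b c - sep_walls a b)"
  by (auto simp: sep_walls_def gp_separates_def)

lemma sep_walls_self: "sep_walls a a = {}"
  by (auto simp: sep_walls_def gp_separates_def)

lemma e_notin_A: "v \<in> V \<Longrightarrow> e \<notin> gp_A V E G v"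
  using cls_in_A_iff[of v "[]"] by (simp add: gp_one_cls)

lemma syllable_in_A: "v \<in> V \<Longrightarrow> x \<in> carrier (G v) \<Longrightarrow> x \<noteq> \<one>\<^bsub>G v\<^esub> \<Longrightarrow> cls [(v,x)] \<in> gp_A V E G v"
  using cls_in_A_iff[of v "[(v,x)]"] by (simp add: syl_act_def)

lemma lead_split_word_act_in_link: "in_link v z \<Longrightarrow> (lead_split v (word_act z r) = None) = (lead_split v r = None)"
  by (induction z) (auto simp: lead_split_syl_act_adj)

lemma in_link_mul_A_iff:
  assumes v: "v \<in> V" and z: "z \<in> W" and a: "in_link v z" and g: "g \<in> C"
  shows "mul (cls z) g \<in> gp_A V E G v \<longleftrightarrow> g \<in> gp_A V E G v"
proof -
  obtain w where w: "w \<in> W" "g = cls w" using g by (auto simp: gp_carrier_eq)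
  have "mul (cls z) g = cls (z@w)" using w z by (simp add: gp_mult_cls)
  moreover have "(lead_split v (nf (z@w)) = None) = (lead_split v (nf w) = None)"
    using lead_split_word_act_in_link[OF a] by simp
  moreover have "z@w \<in> W" using z w by simp
  ultimately show ?thesis using cls_in_A_iff[OF v, of "z@w"] cls_in_A_iff[OF v w(1)] w(2) by simp
qed

lemma in_link_translate_A:
  assumes v: "v \<in> V" and z: "z \<in> W" and a: "in_link v z"
  shows "mul (cls z) ` gp_A V E G v = gp_A V E G v"
proof -
  have zc: "cls z \<in> C" using z by (simp add: cls_in_carrier)
  show ?thesis
  proof
    show "mul (cls z) ` gp_A V E G v \<subseteq> gp_A V E G v" using in_link_mul_A_iff[OF v z a] A_subset_carrier by auto
  next
    show "gp_A V E G v \<subseteq> mul (cls z) ` gp_A V E G v"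
    proof
      fix g assume g: "g \<in> gp_A V E G v"
      have gC: "g \<in> C" using g A_subset_carrier by auto
      have iz: "ginv (cls z) = cls (word_inv z)" using GP_inv_cls z by simp
      have "mul (cls (word_inv z)) g \<in> gp_A V E G v"
        using in_link_mul_A_iff[OF v word_inv_words[OF z] word_inv_in_link[OF a] gC] g by simp
      then show "g \<in> mul (cls z) ` gp_A V E G v"
        using mem_translate_iff[OF zc gC A_subset_carrier] iz by simp
    qed
  qed
qed

lemma cls_snoc_merge_notin_A:
  assumes u: "u \<in> V" and x: "x \<in> carrier (G v)"
    and z: "z = p @ (v,y) # q" "z \<in> W" "normal z" "lead_split u z = None" and q: "in_link v q"
  shows "cls (z @ [(v,x)]) \<notin> gp_A V E G u"
proof
  assume zx: "cls (z @ [(v,x)]) \<in> gp_A V E G u"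
  define t where "t = (if y \<otimes>\<^bsub>G v\<^esub> x = \<one>\<^bsub>G v\<^esub> then p @ q else p @ (v, y \<otimes>\<^bsub>G v\<^esub> x) # q)"
  have "(gp_step E G)\<^sup>*\<^sup>* (z @ [(v,x)]) (p @ [(v,y),(v,x)] @ q)"
    using gp_steps_shuffle_left[OF q, of "p @ [(v,y)]" x "[]"] z(1) by simp
  moreover have "gp_step E G (p @ [(v,y),(v,x)] @ q) (p @ [(v, y \<otimes>\<^bsub>G v\<^esub> x)] @ q)"
    by (rule gp_step.merge)
  moreover have "(gp_step E G)\<^sup>*\<^sup>* (p @ [(v, y \<otimes>\<^bsub>G v\<^esub> x)] @ q) t"
    using gp_step.delete[of E G p v q] by (auto simp: t_def)
  ultimately have st: "(gp_step E G)\<^sup>*\<^sup>* (z @ [(v,x)]) t"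
    by (meson rtranclp.rtrancl_into_rtrancl rtranclp_trans r_into_rtranclp)
  have zxW: "z @ [(v,x)] \<in> W" using z(1,2) x by simp
  have tW: "t \<in> W" using gp_steps_words[OF st zxW] .
  have "cls t = cls (z @ [(v,x)])" using cls_eqI[OF gp_steps_gp_eq[OF st zxW]] by simp
  moreover have "normal t"
  proof (cases "y \<otimes>\<^bsub>G v\<^esub> x = \<one>\<^bsub>G v\<^esub>")
    case True
    then show ?thesis using normal_delete_right[OF q] z(1,3) by (simp add: t_def)
  next
    case False
    then show ?thesis using normal_replace_syllable z(1,3) by (simp add: t_def)
  qed
  moreover have "lead_split u t = None"
  proof (cases "y \<otimes>\<^bsub>G v\<^esub> x = \<one>\<^bsub>G v\<^esub>")
    case True
    then show ?thesis using lead_split_None_delete[OF q] z(1,4) by (simp add: t_def)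
  next
    case False
    then have "map fst t = map fst z" using z(1) by (simp add: t_def)
    then show ?thesis using lead_split_None_map_fst z(4) by metis
  qed
  ultimately show False using zx cls_in_A_iff_normal[OF u tW] by simp
qed

text \<open>If \<open>h \<notin> A\<^sub>u\<close> but \<open>h s \<in> A\<^sub>u\<close>, the normal form of \<open>h s\<close> is that of \<open>h\<close> followed by \<open>s\<close>, and
  its \<open>u\<close>-syllable can be shuffled to the front: so \<open>u = v\<close>, \<open>h\<close> lies in the link of \<open>v\<close>, and such
  elements fix \<open>A\<^sub>v\<close>.\<close>
lemma A_crossed_by_syllable:
  assumes v: "v \<in> V" and x: "x \<in> carrier (G v)" "x \<noteq> \<one>\<^bsub>G v\<^esub>" and u: "u \<in> V" and h: "h \<in> C"
    and hn: "h \<notin> gp_A V E G u" and hs: "mul h (cls [(v,x)]) \<in> gp_A V E G u"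
  shows "u = v \<and> mul (ginv h) ` gp_A V E G v = gp_A V E G v"
proof -
  obtain z where zW: "z \<in> W" and zS: "normal z" and hz: "h = cls z"
    using normal_representative[OF h] .
  have "cls z \<notin> gp_A V E G u" using hn hz by simp
  then have zN: "lead_split u z = None" using cls_in_A_iff_normal[OF u zW zS] by (simp del: not_None_eq)
  have hs': "cls (z @ [(v,x)]) \<in> gp_A V E G u"
    using hs hz gp_mult_cls[OF zW] v x by simp
  have "\<not> (\<exists>p y q. z = p @ (v,y) # q \<and> in_link v q)"
    using cls_snoc_merge_notin_A[OF u x(1) _ zW zS zN] hs' by metis
  then have "normal (z @ [(v,x)])" using normal_snoc[OF zS x(2)] by blast
  then have "lead_split u (z @ [(v,x)]) \<noteq> None"
    using hs' cls_in_A_iff_normal[OF u] zW v x by simp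
  then have au: "in_link u z" and uv: "u = v"
    using zN by (auto simp: lead_split_append_None_iff split: if_splits)
  have "ginv h = cls (word_inv z)" using GP_inv_cls zW hz by simp
  then show ?thesis using in_link_translate_A[OF v word_inv_words[OF zW] word_inv_in_link] au uv by simp
qed

lemma sep_walls_syllable_subset:
  assumes v: "v \<in> V" and x: "x \<in> carrier (G v)" "x \<noteq> \<one>\<^bsub>G v\<^esub>"
  shows "sep_walls e (cls [(v,x)]) \<subseteq> {gp_A V E G v, mul (cls [(v,x)]) ` gp_A V E G v}"
proof
  interpret Gv: group "G v" using vertex_group v by auto
  define s where "s = cls [(v,x)]"
  have sC: "s \<in> C" using v x by (simp add: s_def cls_in_carrier)
  have ix: "inv\<^bsub>G v\<^esub> x \<in> carrier (G v)" "inv\<^bsub>G v\<^esub> x \<noteq> \<one>\<^bsub>G v\<^esub>"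
    using x by (auto simp: Gv.inv_eq_1_iff)
  have s_inv: "ginv s = cls [(v, inv\<^bsub>G v\<^esub> x)]" using GP_inv_cls v x by (simp add: s_def)
  fix S assume "S \<in> sep_walls e s"
  then have sep: "gp_separates S e s" and "S \<in> gp_walls V E G" by (auto simp: sep_walls_def)
  then obtain k u where S: "S = mul k ` gp_A V E G u" and k: "k \<in> C" and u: "u \<in> V"
    by (auto simp: gp_walls_def)
  have "e \<in> S \<longleftrightarrow> ginv k \<in> gp_A V E G u" "s \<in> S \<longleftrightarrow> mul (ginv k) s \<in> gp_A V E G u"
    using mem_translate_iff[OF k _ A_subset_carrier] k sC S by auto
  then consider "ginv k \<notin> gp_A V E G u" "mul (ginv k) s \<in> gp_A V E G u"
    | "ginv k \<in> gp_A V E G u" "mul (ginv k) s \<notin> gp_A V E G u"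
    using sep by (auto simp: gp_separates_def)
  then show "S \<in> {gp_A V E G v, mul s ` gp_A V E G v}"
  proof cases
    case 1
    then have "u = v" "mul k ` gp_A V E G v = gp_A V E G v"
      using A_crossed_by_syllable[OF v x u, of "ginv k"] k by (auto simp: s_def)
    then show ?thesis using S by simp
  next
    case 2
    \<comment> \<open>the first case for the inverse syllable, seen from \<open>k\<inverse> s\<close>\<close>
    define h where "h = mul (ginv k) s"
    have hC: "h \<in> C" using k sC by (simp add: h_def)
    have "mul h (ginv s) = ginv k" using k sC by (simp add: h_def mul_assoc)
    then have "u = v" "mul (ginv h) ` gp_A V E G v = gp_A V E G v"
      using A_crossed_by_syllable[OF v ix u hC] 2 s_inv by (auto simp: h_def)
    moreover have "ginv h = mul (ginv s) k" using k sC by (simp add: h_def ginv_mul)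
    ultimately have "mul s ` gp_A V E G v = mul s ` (mul (mul (ginv s) k) ` gp_A V E G v)" by simp
    also have "\<dots> = mul k ` gp_A V E G v"
      using translate_translate[OF sC _ A_subset_carrier, of "mul (ginv s) k"] k sC
      by (simp add: mul_ginv_cancel)
    finally show ?thesis using S \<open>u = v\<close> by simp
  qed
qed

lemma sep_walls_syllable:
  assumes v: "v \<in> V" and x: "x \<in> carrier (G v)" "x \<noteq> \<one>\<^bsub>G v\<^esub>"
  shows "sep_walls e (cls [(v,x)]) = {gp_A V E G v, mul (cls [(v,x)]) ` gp_A V E G v}"
    and "gp_A V E G v \<noteq> mul (cls [(v,x)]) ` gp_A V E G v"
proof -
  interpret Gv: group "G v" using vertex_group v by auto
  define s where "s = cls [(v,x)]"
  have sC: "s \<in> C" using v x by (simp add: s_def cls_in_carrier)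
  have "ginv s = cls [(v, inv\<^bsub>G v\<^esub> x)]" using GP_inv_cls v x by (simp add: s_def)
  then have "ginv s \<in> gp_A V E G v" using syllable_in_A[OF v] x by (simp add: Gv.inv_eq_1_iff)
  then have e_in: "e \<in> mul s ` gp_A V E G v"
    using mem_translate_iff[OF sC e_closed A_subset_carrier] sC by simp
  have eA: "e \<notin> gp_A V E G v" using e_notin_A[OF v] .
  then have s_notin: "s \<notin> mul s ` gp_A V E G v"
    using mem_translate_iff[OF sC sC A_subset_carrier] sC by simp
  have sA: "s \<in> gp_A V E G v" using syllable_in_A[OF v x] by (simp add: s_def)
  have "mul e ` gp_A V E G v = gp_A V E G v"
    using A_subset_carrier by (auto simp: image_def subset_iff)
  then have "gp_A V E G v \<in> gp_walls V E G" "mul s ` gp_A V E G v \<in> gp_walls V E G"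
    unfolding gp_walls_def using v sC e_closed by blast+
  then have "{gp_A V E G v, mul s ` gp_A V E G v} \<subseteq> sep_walls e s"
    using eA sA e_in s_notin by (auto simp: sep_walls_def gp_separates_def)
  then show "sep_walls e (cls [(v,x)]) = {gp_A V E G v, mul (cls [(v,x)]) ` gp_A V E G v}"
    using sep_walls_syllable_subset[OF v x] by (auto simp: s_def)
  show "gp_A V E G v \<noteq> mul (cls [(v,x)]) ` gp_A V E G v"
    using e_in eA by (auto simp: s_def)
qed

lemma sep_walls_normal_Cons:
  assumes w: "(v,x) # w \<in> W" "normal ((v,x) # w)" and s: "s = cls [(v,x)]"
  shows "sep_walls e (cls ((v,x) # w))
      = {gp_A V E G v, mul s ` gp_A V E G v} \<union> (\<lambda>S. mul s ` S) ` sep_walls e (cls w)"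
    and "{gp_A V E G v, mul s ` gp_A V E G v} \<inter> (\<lambda>S. mul s ` S) ` sep_walls e (cls w) = {}"
proof -
  have v: "v \<in> V" and x: "x \<in> carrier (G v)" "x \<noteq> \<one>\<^bsub>G v\<^esub>" and wW: "w \<in> W"
    and wN: "lead_split v w = None" and wS: "normal w"
    using w by auto
  have sC: "s \<in> C" and gC: "cls w \<in> C" using v x wW by (auto simp: s cls_in_carrier)
  have g: "cls ((v,x) # w) = mul s (cls w)" using gp_mult_cls v x wW by (simp add: s)
  have Y: "sep_walls s (cls ((v,x) # w)) = (\<lambda>S. mul s ` S) ` sep_walls e (cls w)"
    using sep_walls_translate[OF sC e_closed gC] sC by (simp add: g)
  have X: "sep_walls e s = {gp_A V E G v, mul s ` gp_A V E G v}"
    using sep_walls_syllable(1)[OF v x] by (simp add: s)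
  have "cls ((v,x) # w) \<in> gp_A V E G v" "s \<in> gp_A V E G v"
    using cls_in_A_iff_normal[OF v w] syllable_in_A[OF v x] by (auto simp: s)
  then have "gp_A V E G v \<notin> sep_walls s (cls ((v,x) # w))"
    by (auto simp: sep_walls_def gp_separates_def)
  moreover have "cls w \<notin> gp_A V E G v"
    using cls_in_A_iff_normal[OF v wW wS] wN by (simp del: not_None_eq)
  then have "mul s ` gp_A V E G v \<notin> sep_walls s (cls ((v,x) # w))"
    using separates_translate_iff[OF sC e_closed gC A_subset_carrier] e_notin_A[OF v] sC
    by (auto simp: sep_walls_def gp_separates_def g)
  ultimately show disj: "{gp_A V E G v, mul s ` gp_A V E G v} \<inter> (\<lambda>S. mul s ` S) ` sep_walls e (cls w) = {}"
    using Y by auto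
  show "sep_walls e (cls ((v,x) # w))
      = {gp_A V E G v, mul s ` gp_A V E G v} \<union> (\<lambda>S. mul s ` S) ` sep_walls e (cls w)"
    using sep_walls_symdiff[of e "cls ((v,x) # w)" s] disj X Y by auto
qed

lemma sep_walls_normal:
  "w \<in> W \<Longrightarrow> normal w \<Longrightarrow> finite (sep_walls e (cls w)) \<and> card (sep_walls e (cls w)) = 2 * length w"
proof (induction w)
  case Nil
  then show ?case using sep_walls_self by (simp add: gp_one_cls)
next
  case (Cons c w)
  obtain v x where c: "c = (v,x)" by (cases c)
  define s where "s = cls [(v,x)]"
  have v: "v \<in> V" and x: "x \<in> carrier (G v)" "x \<noteq> \<one>\<^bsub>G v\<^esub>" and w: "w \<in> W" "normal w"
    using Cons.prems by (auto simp: c)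
  have sC: "s \<in> C" using v x by (simp add: s_def cls_in_carrier)
  note split = sep_walls_normal_Cons[OF Cons.prems[unfolded c] s_def]
  have "card ((\<lambda>S. mul s ` S) ` sep_walls e (cls w)) = 2 * length w"
    using card_image[OF inj_on_translate[OF sC]] Cons.IH[OF w] by simp
  moreover have "card {gp_A V E G v, mul s ` gp_A V E G v} = 2"
    using sep_walls_syllable(2)[OF v x] by (simp add: s_def)
  ultimately show ?case
    using split Cons.IH[OF w] card_Un_disjoint[OF _ _ split(2)] by (simp add: c)
qed

end

theorem mainTheorem11:
  fixes V :: "'v set" and E :: "'v \<Rightarrow> 'v \<Rightarrow> bool"
    and G :: "'v \<Rightarrow> ('g,'b) monoid_scheme"
  assumes "finite V"
    and "\<And>u v. E u v \<Longrightarrow> u \<in> V \<and> v \<in> V"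
    and "\<And>u v. E u v \<Longrightarrow> E v u"
    and "\<And>v. \<not> E v v"
    and "\<And>v. v \<in> V \<Longrightarrow> group (G v)"
    and "g \<in> gp_carrier V E G"
  shows "finite {S \<in> gp_walls V E G. gp_separates S (gp_one V E G) g}
    \<and> gp_wall_dist V E G (gp_one V E G) g = 2 * gp_rlen E G g"
proof -
  interpret graph_product V E G by (rule graph_product.intro) (use assms in auto)
  obtain w where "w \<in> gp_words V G" "normal w" "g = cls w"
    using normal_representative[OF assms(6)] .
  then show ?thesis
    using sep_walls_normal gp_rlen_normal by (simp add: sep_walls_def gp_wall_dist_def)
qed

end
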